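(* Let $p$ be a prime and $(\Gamma,\theta)$ an oriented profinite group. Suppose that for every open subgroup $U\le\Gamma$ and every natural number $n$ the natural map $H^1(U,\mathbb{Z}_p(1)/p^n)\to H^1(U,\mathbb{Z}_p(1)/p)$ is surjective. Then the same surjectivity holds for every closed subgroup $H\le\Gamma$ and every $n$, i.e. $(\Gamma,\theta)$ is cyclotomic.
   Context: An orientation is a continuous homomorphism $\theta:\Gamma\to\mathbb{Z}_p^\times$ with image in $1+p\mathbb{Z}_p$; $\mathbb{Z}_p(1)$ is $\mathbb{Z}_p$ with action $g.x=\theta(g)x$ and $\mathbb{Z}_p(1)/p^m=\mathbb{Z}_p(1)/p^m\mathbb{Z}_p(1)$. Cohomology is continuous. $(\Gamma,\theta)$ is cyclotomic if for every closed subgroup $H$ and every $m$ the map $H^1(H,\mathbb{Z}_p(1)/p^m)\to H^1(H,\mathbb{Z}_p(1)/p)$ is surjective. *)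

theory Defs
  imports "HOL-Analysis.Analysis" "HOL-Algebra.Group"
begin

definition topological_group :: "('a, 'b) monoid_scheme \<Rightarrow> 'a topology \<Rightarrow> bool" where
  "topological_group G T \<longleftrightarrow> group G \<and> topspace T = carrier G \<and>
     continuous_map (prod_topology T T) T (\<lambda>(x, y). x \<otimes>\<^bsub>G\<^esub> y) \<and>
     continuous_map T T (\<lambda>x. inv\<^bsub>G\<^esub> x)"

definition profinite_group :: "('a, 'b) monoid_scheme \<Rightarrow> 'a topology \<Rightarrow> bool" where
  "profinite_group G T \<longleftrightarrow> topological_group G T \<and> compact_space T \<and> Hausdorff_space T \<and>
     (\<forall>x \<in> topspace T. connected_component_of_set T x = {x})"

text \<open>An element of Z_p = lim Z/p^m is represented by its compatible sequence of residues
  x m \<in> {0..<p^m}.\<close>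
definition padic :: "int \<Rightarrow> (nat \<Rightarrow> int) \<Rightarrow> bool" where
  "padic p x \<longleftrightarrow> (\<forall>m. 0 \<le> x m \<and> x m < p ^ m \<and> x (Suc m) mod p ^ m = x m)"

definition padic_mult :: "int \<Rightarrow> (nat \<Rightarrow> int) \<Rightarrow> (nat \<Rightarrow> int) \<Rightarrow> (nat \<Rightarrow> int)" where
  "padic_mult p x y = (\<lambda>m. (x m * y m) mod p ^ m)"

definition padic_one :: "int \<Rightarrow> nat \<Rightarrow> int" where
  "padic_one p = (\<lambda>m. 1 mod p ^ m)"

text \<open>Continuity w.r.t. the p-adic (inverse limit) topology means: every reduction
  g \<mapsto> theta g mod p^m is continuous into the discrete space Z/p^m.\<close>
definition orientation ::
  "int \<Rightarrow> ('a, 'b) monoid_scheme \<Rightarrow> 'a topology \<Rightarrow> ('a \<Rightarrow> nat \<Rightarrow> int) \<Rightarrow> bool" where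
  "orientation p G T \<theta> \<longleftrightarrow>
     (\<forall>g \<in> carrier G. padic p (\<theta> g) \<and> \<theta> g 1 = 1 mod p) \<and>
     (\<forall>g \<in> carrier G. \<forall>h \<in> carrier G. \<theta> (g \<otimes>\<^bsub>G\<^esub> h) = padic_mult p (\<theta> g) (\<theta> h)) \<and>
     (\<forall>m. continuous_map T (discrete_topology UNIV) (\<lambda>g. \<theta> g m))"

text \<open>Z_p(1)/p^m is {0..<p^m} (i.e. Z/p^m) with action g.x = theta(g) x mod p^m.
  Continuous 1-cocycles (crossed homomorphisms) H \<rightarrow> Z_p(1)/p^m, H a closed subgroup
  with the subspace topology; the coefficient module is finite, hence discrete.\<close>
definition Z1 ::
  "int \<Rightarrow> ('a, 'b) monoid_scheme \<Rightarrow> 'a topology \<Rightarrow> ('a \<Rightarrow> nat \<Rightarrow> int) \<Rightarrow> 'a set \<Rightarrow> nat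
    \<Rightarrow> ('a \<Rightarrow> int) set" where
  "Z1 p G T \<theta> H m = {c. c \<in> extensional H \<and> (\<forall>h \<in> H. 0 \<le> c h \<and> c h < p ^ m) \<and>
      (\<forall>g \<in> H. \<forall>h \<in> H. c (g \<otimes>\<^bsub>G\<^esub> h) = (c g + \<theta> g m * c h) mod p ^ m) \<and>
      continuous_map (subtopology T H) (discrete_topology UNIV) c}"

definition cohomologous ::
  "int \<Rightarrow> ('a, 'b) monoid_scheme \<Rightarrow> 'a topology \<Rightarrow> ('a \<Rightarrow> nat \<Rightarrow> int) \<Rightarrow> 'a set \<Rightarrow> nat
    \<Rightarrow> (('a \<Rightarrow> int) \<times> ('a \<Rightarrow> int)) set" where
  "cohomologous p G T \<theta> H m = {(c, d). c \<in> Z1 p G T \<theta> H m \<and> d \<in> Z1 p G T \<theta> H m \<and>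
      (\<exists>a. 0 \<le> a \<and> a < p ^ m \<and> (\<forall>h \<in> H. c h = (d h + \<theta> h m * a - a) mod p ^ m))}"

definition H1 ::
  "int \<Rightarrow> ('a, 'b) monoid_scheme \<Rightarrow> 'a topology \<Rightarrow> ('a \<Rightarrow> nat \<Rightarrow> int) \<Rightarrow> 'a set \<Rightarrow> nat
    \<Rightarrow> ('a \<Rightarrow> int) set set" where
  "H1 p G T \<theta> H m = Z1 p G T \<theta> H m // cohomologous p G T \<theta> H m"

definition reduce_cocycle :: "int \<Rightarrow> 'a set \<Rightarrow> ('a \<Rightarrow> int) \<Rightarrow> ('a \<Rightarrow> int)" where
  "reduce_cocycle p H c = restrict (\<lambda>h. c h mod p) H"

definition H1_reduction ::
  "int \<Rightarrow> ('a, 'b) monoid_scheme \<Rightarrow> 'a topology \<Rightarrow> ('a \<Rightarrow> nat \<Rightarrow> int) \<Rightarrow> 'a set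
    \<Rightarrow> ('a \<Rightarrow> int) set \<Rightarrow> ('a \<Rightarrow> int) set" where
  "H1_reduction p G T \<theta> H C =
     (\<Union>c \<in> C. cohomologous p G T \<theta> H 1 `` {reduce_cocycle p H c})"

definition H1_reduction_surjective ::
  "int \<Rightarrow> ('a, 'b) monoid_scheme \<Rightarrow> 'a topology \<Rightarrow> ('a \<Rightarrow> nat \<Rightarrow> int) \<Rightarrow> 'a set \<Rightarrow> nat \<Rightarrow> bool" where
  "H1_reduction_surjective p G T \<theta> H n \<longleftrightarrow>
     H1_reduction p G T \<theta> H ` H1 p G T \<theta> H n = H1 p G T \<theta> H 1"

definition cyclotomic ::
  "int \<Rightarrow> ('a, 'b) monoid_scheme \<Rightarrow> 'a topology \<Rightarrow> ('a \<Rightarrow> nat \<Rightarrow> int) \<Rightarrow> bool" where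
  "cyclotomic p G T \<theta> \<longleftrightarrow>
     (\<forall>H n. subgroup H G \<and> closedin T H \<and> n \<ge> 1 \<longrightarrow> H1_reduction_surjective p G T \<theta> H n)"

end

theory Submission
  imports Defs "HOL-Algebra.SndIsomorphismGrp"
begin

(* Since \<theta> \<equiv> 1 mod p, coboundaries vanish modulo p, so H^1(H, Z/p) is the set of
   continuous homomorphisms H \<rightarrow> Z/p, and surjectivity of H^1(H, Z/p^n) \<rightarrow> H^1(H, Z/p)
   says that every such homomorphism c lifts to a cocycle modulo p^n. The kernel of c is open
   in H, so it contains N \<inter> H for an open normal subgroup N of the profinite group; hence c
   extends to the open subgroup N H by c(n h) = c(h). Lifting this extension by the hypothesis
   on N H and restricting the lift to H gives the lift of c. *)

section \<open>Topological and profinite groups\<close>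

lemma continuous_map_discrete_if_locally_constant:
  assumes "\<And>x. x \<in> topspace X \<Longrightarrow> \<exists>S. openin X S \<and> x \<in> S \<and> (\<forall>y \<in> S. f y = f x)"
  shows "continuous_map X (discrete_topology UNIV) f"
  unfolding continuous_map_def
proof (intro conjI allI impI)
  fix V :: "'b set"
  show "openin X {x \<in> topspace X. f x \<in> V}"
  proof (rule openin_subopen[THEN iffD2, rule_format])
    fix x assume x: "x \<in> {x \<in> topspace X. f x \<in> V}"
    then obtain S where S: "openin X S" "x \<in> S" "\<forall>y \<in> S. f y = f x"
      using assms[of x] by blast
    moreover have "S \<subseteq> {x \<in> topspace X. f x \<in> V}"
    proof
      fix y assume y: "y \<in> S"
      then have "f y = f x"
        using S(3) by blast
      with y x openin_subset[OF S(1)] show "y \<in> {x \<in> topspace X. f x \<in> V}"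
        by auto
    qed
    ultimately show "\<exists>S. openin X S \<and> x \<in> S \<and> S \<subseteq> {x \<in> topspace X. f x \<in> V}"
      by blast
  qed
qed simp

context group
begin

lemma continuous_map_right_mult:
  assumes "topological_group G T" and "a \<in> carrier G"
  shows "continuous_map T T (\<lambda>x. x \<otimes> a)"
proof -
  have mult: "continuous_map (prod_topology T T) T (\<lambda>(x, y). x \<otimes> y)"
    using assms(1) by (simp add: topological_group_def)
  have "continuous_map T (prod_topology T T) (\<lambda>x. (x, a))"
    using assms by (intro continuous_map_pairedI) (simp_all add: topological_group_def)
  from continuous_map_compose[OF this mult] show ?thesis
    by (simp add: o_def)
qed

lemma continuous_map_conj:
  assumes "topological_group G T"
  shows "continuous_map (prod_topology T T) T (\<lambda>(g, x). g \<otimes> x \<otimes> inv g)"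
proof -
  have mult: "continuous_map (prod_topology T T) T (\<lambda>(x, y). x \<otimes> y)"
    and inv: "continuous_map T T (\<lambda>x. inv x)"
    using assms by (auto simp: topological_group_def)
  have "continuous_map (prod_topology T T) (prod_topology T T) (\<lambda>(g, x). (g \<otimes> x, inv g))"
    using continuous_map_compose[OF continuous_map_fst inv] mult
    by (auto simp: case_prod_unfold o_def intro!: continuous_map_pairedI)
  from continuous_map_compose[OF this mult] show ?thesis
    by (simp add: o_def case_prod_unfold)
qed

lemma openin_rcos:
  assumes tg: "topological_group G T" and B: "openin T B" and a: "a \<in> carrier G"
  shows "openin T (B #> a)"
proof -
  have top: "topspace T = carrier G"
    using tg by (simp add: topological_group_def)
  with B have B_carrier: "B \<subseteq> carrier G"
    using openin_subset by blast
  have "B #> a = {x \<in> topspace T. x \<otimes> inv a \<in> B}"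
  proof (rule Set.set_eqI, rule iffI) \<comment> \<open>unqualified set_eqI is HOL-Algebra's congruence version\<close>
    fix x assume "x \<in> B #> a"
    then obtain b where "b \<in> B" "x = b \<otimes> a"
      unfolding r_coset_def by blast
    then show "x \<in> {x \<in> topspace T. x \<otimes> inv a \<in> B}"
      using a B_carrier by (auto simp: top m_assoc)
  next
    fix x assume x: "x \<in> {x \<in> topspace T. x \<otimes> inv a \<in> B}"
    then have "x = (x \<otimes> inv a) \<otimes> a"
      using a by (simp add: top m_assoc)
    with x show "x \<in> B #> a"
      unfolding r_coset_def by blast
  qed
  moreover have "openin T {x \<in> topspace T. x \<otimes> inv a \<in> B}"
    using openin_continuous_map_preimage[OF continuous_map_right_mult[OF tg inv_closed[OF a]] B] .
  ultimately show ?thesis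
    by (simp only:)
qed

lemma openin_subgroup_if_nbhd_of_one:
  assumes tg: "topological_group G T" and V: "subgroup V G"
    and B: "openin T B" "\<one> \<in> B" "B \<subseteq> V"
  shows "openin T V"
proof (rule openin_subopen[THEN iffD2, rule_format])
  fix v assume v: "v \<in> V"
  then have "v \<in> carrier G"
    by (rule subgroup.mem_carrier[OF V])
  moreover have "\<one> \<otimes> v \<in> B #> v"
    using B(2) by (auto simp: r_coset_def)
  ultimately have "v \<in> B #> v"
    by simp
  moreover have "B #> v \<subseteq> V"
    using B(3) v subgroup.m_closed[OF V] by (auto simp: r_coset_def)
  ultimately show "\<exists>S. openin T S \<and> v \<in> S \<and> S \<subseteq> V"
    using openin_rcos[OF tg B(1) \<open>v \<in> carrier G\<close>] by blast
qed

lemma profinite_clopen_nbhd_of_one: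
  assumes pf: "profinite_group G T" and W: "openin T W" "\<one> \<in> W"
  shows "\<exists>C. openin T C \<and> closedin T C \<and> \<one> \<in> C \<and> C \<subseteq> W"
proof -
  have cs: "compact_space T" and hs: "Hausdorff_space T"
    and components: "\<And>x. x \<in> topspace T \<Longrightarrow> connected_component_of_set T x = {x}"
    using pf by (auto simp: profinite_group_def)
  have one: "\<one> \<in> topspace T"
    using W openin_subset by blast
  have "separated_between T {\<one>} (topspace T - W)"
  proof (rule cut_wire_fence_theorem[OF cs hs])
    show "closedin T {\<one>}"
      using closedin_t1_singleton[OF Hausdorff_imp_t1_space[OF hs] one] .
    show "closedin T (topspace T - W)"
      using W(1) by blast
    fix C assume "connectedin T C"
    then have "C \<subseteq> {\<one>}" if "\<one> \<in> C"
      using connected_component_of_maximal[OF _ that] components[OF one] by blast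
    with W(2) show "disjnt C {\<one>} \<or> disjnt C (topspace T - W)"
      by (auto simp: disjnt_def)
  qed
  then obtain U V where UV: "openin T U" "openin T V" "U \<union> V = topspace T" "disjnt U V"
    "{\<one>} \<subseteq> U" "topspace T - W \<subseteq> V"
    unfolding separated_between_def by blast
  have "U = topspace T - V"
    using UV(3,4) by (auto simp: disjnt_def)
  then have "closedin T U"
    using UV(2) by (simp add: closedin_diff)
  moreover have "U \<subseteq> W"
    using UV(1,4,6) openin_subset by (fastforce simp: disjnt_def)
  ultimately show ?thesis
    using UV(1,5) by blast
qed

text \<open>The right stabiliser of a clopen neighbourhood C of the identity is an open subgroup
  inside C; it is open because, by compactness of C and the tube lemma, some neighbourhood B
  of the identity satisfies C B \<subseteq> C.\<close>
lemma compact_group_open_subgroup_in_clopen: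
  assumes tg: "topological_group G T" and cs: "compact_space T"
    and C: "openin T C" "closedin T C" "\<one> \<in> C"
  shows "\<exists>V. subgroup V G \<and> openin T V \<and> V \<subseteq> C"
proof -
  have top: "topspace T = carrier G"
    using tg by (simp add: topological_group_def)
  have C_carrier: "C \<subseteq> carrier G"
    using C(1) openin_subset top by blast
  define V where "V = {g \<in> carrier G. C #> g = C}"
  have "subgroup V G"
  proof (rule subgroupI)
    show "V \<subseteq> carrier G"
      by (auto simp: V_def)
    show "V \<noteq> {}"
      using C_carrier coset_mult_one[of C] unfolding V_def by blast
    show "inv g \<in> V" if "g \<in> V" for g
    proof -
      have g: "g \<in> carrier G" "C #> g = C"
        using that by (auto simp: V_def)
      then have "C #> inv g = (C #> g) #> inv g"
        by simp
      also have "\<dots> = C"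
        using g(1) C_carrier by (simp add: coset_mult_assoc)
      finally show ?thesis
        using g(1) by (simp add: V_def)
    qed
    show "g \<otimes> h \<in> V" if "g \<in> V" "h \<in> V" for g h
      using that C_carrier coset_mult_assoc[of C g h] by (simp add: V_def)
  qed
  moreover have "V \<subseteq> C"
  proof
    fix g assume "g \<in> V"
    then have "g \<in> C #> g" "C #> g = C"
      using C(3) by (force simp: V_def r_coset_def)+
    then show "g \<in> C"
      by simp
  qed
  moreover have "openin T V"
  proof -
    have mult: "continuous_map (prod_topology T T) T (\<lambda>(x, y). x \<otimes> y)"
      and inv: "continuous_map T T (\<lambda>x. inv x)"
      using tg by (auto simp: topological_group_def)
    define P where "P = {z \<in> topspace (prod_topology T T). (\<lambda>(x, y). x \<otimes> y) z \<in> C}"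
    have P_open: "openin (prod_topology T T) P"
      unfolding P_def by (rule openin_continuous_map_preimage[OF mult C(1)])
    have one: "\<one> \<in> topspace T" and CP: "C \<times> {\<one>} \<subseteq> P"
      using C_carrier top by (auto simp: P_def)
    then obtain U B where B: "openin T U" "openin T B" "C \<subseteq> U" "\<one> \<in> B" "U \<times> B \<subseteq> P"
      using tube_lemma_left[OF P_open closedin_compact_space[OF cs C(2)] one CP] by blast
    have CB: "C #> b \<subseteq> C" if "b \<in> B" for b
    proof
      fix x assume "x \<in> C #> b"
      then obtain c where "c \<in> C" "x = c \<otimes> b"
        by (auto simp: r_coset_def)
      moreover from this have "(c, b) \<in> P"
        using that B(3,5) by blast
      ultimately show "x \<in> C"
        by (simp add: P_def)
    qed
    define S where "S = B \<inter> {x \<in> topspace T. inv x \<in> B}"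
    have "openin T S"
      unfolding S_def by (intro openin_Int B(2) openin_continuous_map_preimage[OF inv B(2)])
    moreover have "\<one> \<in> S"
      using B(4) top by (simp add: S_def)
    moreover have "S \<subseteq> V"
    proof
      fix s assume s: "s \<in> S"
      then have s_carrier: "s \<in> carrier G" and "s \<in> B" "inv s \<in> B"
        using top by (auto simp: S_def)
      have "C = (C #> inv s) #> s"
        using s_carrier C_carrier by (simp add: coset_mult_assoc)
      also have "\<dots> \<subseteq> C #> s"
        using CB[OF \<open>inv s \<in> B\<close>] by (auto simp: r_coset_def)
      finally show "s \<in> V"
        using CB[OF \<open>s \<in> B\<close>] s_carrier by (simp add: V_def)
    qed
    ultimately show ?thesis
      using openin_subgroup_if_nbhd_of_one[OF tg \<open>subgroup V G\<close>] by blast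
  qed
  ultimately show ?thesis
    by blast
qed

lemma compact_group_open_normal_subgroup_in_open_subgroup:
  assumes tg: "topological_group G T" and cs: "compact_space T"
    and V: "subgroup V G" "openin T V"
  shows "\<exists>N. N \<lhd> G \<and> openin T N \<and> N \<subseteq> V"
proof -
  have top: "topspace T = carrier G"
    using tg by (simp add: topological_group_def)
  define N where "N = {x \<in> carrier G. \<forall>g \<in> carrier G. g \<otimes> x \<otimes> inv g \<in> V}"
  have "subgroup N G"
  proof (rule subgroupI)
    show "N \<subseteq> carrier G" "N \<noteq> {}"
      using subgroup.one_closed[OF V(1)] by (auto simp: N_def intro!: exI[of _ \<one>])
    show "inv x \<in> N" if "x \<in> N" for x
    proof -
      have "g \<otimes> inv x \<otimes> inv g = inv (g \<otimes> x \<otimes> inv g)" if "g \<in> carrier G" for g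
        using that \<open>x \<in> N\<close> by (simp add: N_def m_assoc inv_mult_group)
      then show ?thesis
        using that subgroup.m_inv_closed[OF V(1)] by (auto simp: N_def)
    qed
    show "x \<otimes> y \<in> N" if "x \<in> N" "y \<in> N" for x y
    proof -
      have "g \<otimes> (x \<otimes> y) \<otimes> inv g = (g \<otimes> x \<otimes> inv g) \<otimes> (g \<otimes> y \<otimes> inv g)"
        if "g \<in> carrier G" for g
        using that \<open>x \<in> N\<close> \<open>y \<in> N\<close> by (simp add: N_def m_assoc) (simp add: m_assoc [symmetric])
      then show ?thesis
        using that subgroup.m_closed[OF V(1)] by (auto simp: N_def)
    qed
  qed
  moreover have "g \<otimes> x \<otimes> inv g \<in> N" if "g \<in> carrier G" "x \<in> N" for g x
  proof -
    have "h \<otimes> (g \<otimes> x \<otimes> inv g) \<otimes> inv h = (h \<otimes> g) \<otimes> x \<otimes> inv (h \<otimes> g)"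
      if "h \<in> carrier G" for h
      using that \<open>g \<in> carrier G\<close> \<open>x \<in> N\<close> by (simp add: N_def m_assoc inv_mult_group)
    then show ?thesis
      using that by (simp add: N_def)
  qed
  ultimately have "N \<lhd> G"
    by (simp add: normal_inv_iff)
  moreover have "N \<subseteq> V"
  proof
    fix x assume "x \<in> N"
    then show "x \<in> V"
      by (auto simp: N_def dest!: bspec[of _ _ \<one>])
  qed
  moreover have "openin T N"
  proof -
    define Q where "Q = {z \<in> topspace (prod_topology T T). (\<lambda>(g, x). g \<otimes> x \<otimes> inv g) z \<in> V}"
    have Q_open: "openin (prod_topology T T) Q"
      unfolding Q_def by (rule openin_continuous_map_preimage[OF continuous_map_conj[OF tg] V(2)])
    have one: "\<one> \<in> topspace T" and TQ: "topspace T \<times> {\<one>} \<subseteq> Q"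
      using top subgroup.one_closed[OF V(1)] by (auto simp: Q_def)
    then obtain U B where B: "openin T U" "openin T B" "topspace T \<subseteq> U" "\<one> \<in> B" "U \<times> B \<subseteq> Q"
      using tube_lemma_left[OF Q_open cs[unfolded compact_space_def] one TQ] by blast
    have "B \<subseteq> N"
    proof
      fix b assume "b \<in> B"
      then have "(g, b) \<in> Q" if "g \<in> carrier G" for g
        using that B(3,5) top by blast
      then show "b \<in> N"
        using \<open>b \<in> B\<close> openin_subset[OF B(2)] top by (auto simp: N_def Q_def)
    qed
    with B(2,4) show ?thesis
      using openin_subgroup_if_nbhd_of_one[OF tg \<open>subgroup N G\<close>] by blast
  qed
  ultimately show ?thesis
    by blast
qed

lemma profinite_open_normal_subgroup_in_nbhd:
  assumes pf: "profinite_group G T" and W: "openin T W" "\<one> \<in> W"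
  shows "\<exists>N. N \<lhd> G \<and> openin T N \<and> N \<subseteq> W"
proof -
  have tg: "topological_group G T" and cs: "compact_space T"
    using pf by (auto simp: profinite_group_def)
  obtain C where "openin T C" "closedin T C" "\<one> \<in> C" "C \<subseteq> W"
    using profinite_clopen_nbhd_of_one[OF pf W] by blast
  moreover from this obtain V where "subgroup V G" "openin T V" "V \<subseteq> C"
    using compact_group_open_subgroup_in_clopen[OF tg cs] by blast
  moreover from this obtain N where "N \<lhd> G" "openin T N" "N \<subseteq> V"
    using compact_group_open_normal_subgroup_in_open_subgroup[OF tg cs] by blast
  ultimately show ?thesis
    by blast
qed

end

section \<open>Extending functions from H to N H\<close>

definition coset_extension :: "('a, 'b) monoid_scheme \<Rightarrow> 'a set \<Rightarrow> 'a set \<Rightarrow> ('a \<Rightarrow> 'c) \<Rightarrow> 'a \<Rightarrow> 'c"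
  where "coset_extension G N H f x = f (SOME h. h \<in> H \<and> x \<in> N #>\<^bsub>G\<^esub> h)"

context group
begin

lemma set_mult_normal_subgroup:
  assumes "N \<lhd> G" and "subgroup H G"
  shows "subgroup (N <#> H) G"
  using assms second_isomorphism_grp.normal_set_mult_subgroup
  unfolding second_isomorphism_grp_def second_isomorphism_grp_axioms_def by blast

lemma mem_set_mult_rcos_iff: "x \<in> N <#> H \<longleftrightarrow> (\<exists>h \<in> H. x \<in> N #> h)"
  unfolding set_mult_def r_coset_def by blast

lemma coset_extension_eq:
  assumes N: "subgroup N G" and H: "subgroup H G"
    and invariant: "\<And>k h. k \<in> N \<inter> H \<Longrightarrow> h \<in> H \<Longrightarrow> f (k \<otimes> h) = f h"
    and h: "h \<in> H" and x: "x \<in> N #> h"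
  shows "coset_extension G N H f x = f h"
proof -
  define h' where "h' = (SOME h. h \<in> H \<and> x \<in> N #> h)"
  have h': "h' \<in> H" "x \<in> N #> h'"
    unfolding h'_def using someI[of "\<lambda>h. h \<in> H \<and> x \<in> N #> h"] h x by blast+
  have carrier: "h \<in> carrier G" "h' \<in> carrier G"
    using h h'(1) subgroup.mem_carrier[OF H] by auto
  have "N #> h' = N #> h"
    using repr_independence[OF h'(2) carrier(2) N] repr_independence[OF x carrier(1) N] by simp
  then have "h \<in> N #> h'"
    using rcos_self[OF carrier(1) N] by simp
  then have k: "h \<otimes> inv h' \<in> N \<inter> H"
    using subgroup.rcos_module_imp[OF N is_group carrier(2)] h h'(1)
      subgroup.m_closed[OF H] subgroup.m_inv_closed[OF H] by blast
  have "h = (h \<otimes> inv h') \<otimes> h'"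
    using carrier by (simp add: m_assoc)
  then have "f h = f h'"
    using invariant[OF k h'(1)] by simp
  then show ?thesis
    by (simp add: coset_extension_def h'_def)
qed

end

section \<open>Cocycles of oriented groups\<close>

lemma mod_add_mult_cong_one:
  fixes a b t p :: int
  assumes "t mod p = 1"
  shows "(a + t * b) mod p = (a + b) mod p"
  by (metis assms mod_add_cong mod_mult_right_eq mult.commute mult.right_neutral)

lemma padic_mod_p:
  assumes x: "padic p x" and p: "1 < p" and n: "1 \<le> n"
  shows "x n mod p = x 1"
  using n
proof (induction n rule: nat_induct_at_least)
  case base
  have "0 \<le> x 1" "x 1 < p"
    using x unfolding padic_def by (metis power_one_right)+
  then show ?case
    by simp
next
  case (Suc m)
  have "x (Suc m) mod p = x (Suc m) mod p ^ m mod p"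
    using Suc.hyps by (simp add: mod_mod_cancel)
  also have "\<dots> = x m mod p"
    using x by (simp add: padic_def)
  finally show ?case
    using Suc.IH by simp
qed

lemma Z1_memI:
  assumes "c \<in> extensional H" and "\<And>h. h \<in> H \<Longrightarrow> 0 \<le> c h \<and> c h < p ^ m"
    and "\<And>g h. g \<in> H \<Longrightarrow> h \<in> H \<Longrightarrow> c (g \<otimes>\<^bsub>G\<^esub> h) = (c g + \<theta> g m * c h) mod p ^ m"
    and "continuous_map (subtopology T H) (discrete_topology UNIV) c"
  shows "c \<in> Z1 p G T \<theta> H m"
  using assms by (simp add: Z1_def)

lemma
  assumes "c \<in> Z1 p G T \<theta> H m"
  shows Z1_extensional: "c \<in> extensional H"
    and Z1_range: "h \<in> H \<Longrightarrow> 0 \<le> c h \<and> c h < p ^ m"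
    and Z1_cocycle: "g \<in> H \<Longrightarrow> h \<in> H \<Longrightarrow> c (g \<otimes>\<^bsub>G\<^esub> h) = (c g + \<theta> g m * c h) mod p ^ m"
    and Z1_continuous: "continuous_map (subtopology T H) (discrete_topology UNIV) c"
  using assms by (simp_all add: Z1_def)

lemma restrict_in_Z1:
  assumes H: "subgroup H G" and HU: "H \<subseteq> U" and x: "x \<in> Z1 p G T \<theta> U n"
  shows "restrict x H \<in> Z1 p G T \<theta> H n"
proof (rule Z1_memI)
  show "restrict x H (g \<otimes>\<^bsub>G\<^esub> h) = (restrict x H g + \<theta> g n * restrict x H h) mod p ^ n"
    if "g \<in> H" "h \<in> H" for g h
    using that Z1_cocycle[OF x subsetD[OF HU that(1)] subsetD[OF HU that(2)]]
      subgroup.m_closed[OF H that] by simp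
  show "continuous_map (subtopology T H) (discrete_topology UNIV) (restrict x H)"
    by (rule continuous_map_eq[OF continuous_map_from_subtopology_mono[OF Z1_continuous[OF x] HU]])
      simp
qed (use HU Z1_range[OF x] in auto)

lemma reduce_cocycle_restrict:
  "H \<subseteq> U \<Longrightarrow> reduce_cocycle p H (restrict x H) = restrict (reduce_cocycle p U x) H"
  unfolding reduce_cocycle_def by (intro ext) auto

locale oriented_group = group G for G :: "('a, 'b) monoid_scheme" (structure) +
  fixes p :: int and T :: "'a topology" and \<theta> :: "'a \<Rightarrow> nat \<Rightarrow> int"
  assumes prime_p: "prime p" and orientation: "orientation p G T \<theta>"
begin

lemma p_gt_1: "1 < p"
  using prime_p prime_gt_1_int by blast

lemma theta_level_one: "g \<in> carrier G \<Longrightarrow> \<theta> g 1 = 1"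
  using orientation p_gt_1 by (simp add: orientation_def)

lemma theta_mod_p:
  assumes "g \<in> carrier G" and "1 \<le> n"
  shows "\<theta> g n mod p = 1"
proof -
  have "padic p (\<theta> g)"
    using orientation assms(1) by (simp add: orientation_def)
  from padic_mod_p[OF this p_gt_1 assms(2)] show ?thesis
    using theta_level_one[OF assms(1)] by simp
qed

lemma Z1_level_one_hom:
  assumes "H \<subseteq> carrier G" "c \<in> Z1 p G T \<theta> H 1" "g \<in> H" "h \<in> H"
  shows "c (g \<otimes> h) = (c g + c h) mod p"
  using Z1_cocycle[OF assms(2-4)] theta_level_one assms(1,3) by auto

lemma cohomologous_refl:
  assumes "x \<in> Z1 p G T \<theta> H m"
  shows "(x, x) \<in> cohomologous p G T \<theta> H m"
proof -
  have "\<forall>h \<in> H. x h = (x h + \<theta> h m * 0 - 0) mod p ^ m"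
    using Z1_range[OF assms] by simp
  then show ?thesis
    using assms p_gt_1 unfolding cohomologous_def by auto
qed

lemma cohomologous_level_one_iff:
  assumes H: "H \<subseteq> carrier G"
  shows "(c, d) \<in> cohomologous p G T \<theta> H 1 \<longleftrightarrow> c \<in> Z1 p G T \<theta> H 1 \<and> d = c"
proof
  assume "(c, d) \<in> cohomologous p G T \<theta> H 1"
  then obtain a where c: "c \<in> Z1 p G T \<theta> H 1" and d: "d \<in> Z1 p G T \<theta> H 1"
    and eq: "\<forall>h \<in> H. c h = (d h + \<theta> h 1 * a - a) mod p ^ 1"
    unfolding cohomologous_def by blast
  have "c h = d h" if "h \<in> H" for h
    using eq that H theta_level_one Z1_range[OF d that] by auto
  then have "d = c"
    using Z1_extensional[OF c] Z1_extensional[OF d] by (intro extensionalityI[of _ H]) auto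
  with c show "c \<in> Z1 p G T \<theta> H 1 \<and> d = c"
    by blast
next
  assume "c \<in> Z1 p G T \<theta> H 1 \<and> d = c"
  then show "(c, d) \<in> cohomologous p G T \<theta> H 1"
    using cohomologous_refl by blast
qed

lemma reduce_cocycle_in_Z1:
  assumes H: "subgroup H G" and n: "1 \<le> n" and x: "x \<in> Z1 p G T \<theta> H n"
  shows "reduce_cocycle p H x \<in> Z1 p G T \<theta> H 1"
proof (rule Z1_memI)
  have "p dvd p ^ n"
    using n by (simp add: dvd_power)
  then have "x (g \<otimes> h) mod p = (x g mod p + \<theta> g 1 * (x h mod p)) mod p"
    if "g \<in> H" "h \<in> H" for g h
    using that Z1_cocycle[OF x that] theta_mod_p[OF _ n] theta_level_one subgroup.mem_carrier[OF H]
    by (simp add: mod_mod_cancel mod_add_mult_cong_one mod_add_eq)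
  then show "reduce_cocycle p H x (g \<otimes> h) =
      (reduce_cocycle p H x g + \<theta> g 1 * reduce_cocycle p H x h) mod p ^ 1"
    if "g \<in> H" "h \<in> H" for g h
    using that subgroup.m_closed[OF H] by (simp add: reduce_cocycle_def)
  have "continuous_map (subtopology T H) (discrete_topology UNIV) ((\<lambda>v. v mod p) \<circ> x)"
    by (intro continuous_map_compose[OF Z1_continuous[OF x]]) simp
  then show "continuous_map (subtopology T H) (discrete_topology UNIV) (reduce_cocycle p H x)"
    by (rule continuous_map_eq) (simp add: reduce_cocycle_def)
qed (use p_gt_1 in \<open>simp_all add: reduce_cocycle_def\<close>)

lemma reduce_cocycle_cohomologous:
  assumes H: "H \<subseteq> carrier G" and n: "1 \<le> n" and xe: "(x, e) \<in> cohomologous p G T \<theta> H n"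
  shows "reduce_cocycle p H x = reduce_cocycle p H e"
proof -
  obtain a where eq: "\<forall>h \<in> H. x h = (e h + \<theta> h n * a - a) mod p ^ n"
    using xe unfolding cohomologous_def by blast
  have "p dvd p ^ n"
    using n by (simp add: dvd_power)
  have "x h mod p = e h mod p" if "h \<in> H" for h
  proof -
    have "x h mod p = ((e h - a) + \<theta> h n * a) mod p"
      using eq that \<open>p dvd p ^ n\<close> by (simp add: mod_mod_cancel algebra_simps)
    also have "\<dots> = e h mod p"
      using theta_mod_p[OF subsetD[OF H that] n] by (simp add: mod_add_mult_cong_one)
    finally show ?thesis .
  qed
  then show ?thesis
    unfolding reduce_cocycle_def by (intro restrict_ext) simp
qed

lemma H1_reduction_class:
  assumes H: "subgroup H G" and n: "1 \<le> n" and x: "x \<in> Z1 p G T \<theta> H n"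
  shows "H1_reduction p G T \<theta> H (cohomologous p G T \<theta> H n `` {x}) = {reduce_cocycle p H x}"
proof -
  have H_carrier: "H \<subseteq> carrier G"
    using H by (rule subgroup.subset)
  have "H1_reduction p G T \<theta> H (cohomologous p G T \<theta> H n `` {x})
      = (\<Union>e \<in> cohomologous p G T \<theta> H n `` {x}. cohomologous p G T \<theta> H 1 `` {reduce_cocycle p H x})"
    unfolding H1_reduction_def using reduce_cocycle_cohomologous[OF H_carrier n]
    by (intro SUP_cong) auto
  also have "\<dots> = cohomologous p G T \<theta> H 1 `` {reduce_cocycle p H x}"
    using cohomologous_refl[OF x] by auto
  also have "\<dots> = {reduce_cocycle p H x}"
    using cohomologous_level_one_iff[OF H_carrier] reduce_cocycle_in_Z1[OF H n x] by auto
  finally show ?thesis .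
qed

lemma H1_reduction_surjective_iff:
  assumes H: "subgroup H G" and n: "1 \<le> n"
  shows "H1_reduction_surjective p G T \<theta> H n \<longleftrightarrow>
    Z1 p G T \<theta> H 1 \<subseteq> reduce_cocycle p H ` Z1 p G T \<theta> H n"
proof -
  have H_carrier: "H \<subseteq> carrier G"
    using H by (rule subgroup.subset)
  have "H1 p G T \<theta> H 1 = (\<lambda>c. {c}) ` Z1 p G T \<theta> H 1"
    unfolding H1_def quotient_def using cohomologous_level_one_iff[OF H_carrier] by auto
  moreover have "H1_reduction p G T \<theta> H ` H1 p G T \<theta> H n
      = (\<lambda>c. {c}) ` reduce_cocycle p H ` Z1 p G T \<theta> H n"
    unfolding H1_def quotient_def using H1_reduction_class[OF H n] by auto
  moreover have "reduce_cocycle p H ` Z1 p G T \<theta> H n \<subseteq> Z1 p G T \<theta> H 1"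
    using reduce_cocycle_in_Z1[OF H n] by blast
  ultimately show ?thesis
    unfolding H1_reduction_surjective_def by (auto simp: inj_image_eq_iff)
qed

lemma Z1_level_one_vanishes_near_one:
  assumes tg: "topological_group G T" and H: "subgroup H G" and c: "c \<in> Z1 p G T \<theta> H 1"
  shows "\<exists>W. openin T W \<and> \<one> \<in> W \<and> (\<forall>h \<in> W \<inter> H. c h = 0)"
proof -
  have H_carrier: "H \<subseteq> carrier G"
    using H by (rule subgroup.subset)
  have one: "\<one> \<in> H"
    using H by (rule subgroup.one_closed)
  have "c \<one> = 0"
  proof -
    have range: "0 \<le> c \<one>" "c \<one> < p"
      using Z1_range[OF c one] by auto
    have "(c \<one> + c \<one>) mod p = c \<one> mod p"
      using Z1_level_one_hom[OF H_carrier c one one] range by simp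
    then have "p dvd c \<one>"
      by (simp add: mod_eq_dvd_iff)
    with range show ?thesis
      using zdvd_imp_le[of p "c \<one>"] by fastforce
  qed
  have "openin (subtopology T H) {h \<in> topspace (subtopology T H). c h \<in> {0}}"
    by (rule openin_continuous_map_preimage[OF Z1_continuous[OF c]]) simp
  then obtain W where W: "openin T W" "{h \<in> topspace (subtopology T H). c h \<in> {0}} = W \<inter> H"
    unfolding openin_subtopology by blast
  moreover have "topspace (subtopology T H) = H"
    using tg H_carrier by (auto simp: topological_group_def)
  ultimately show ?thesis
    using \<open>c \<one> = 0\<close> one by blast
qed

text \<open>The extension is c'(n h) = c(h); it is well defined because c vanishes on N \<inter> H,
  a homomorphism because N is normal, and continuous because it is constant on the open
  cosets of N.\<close>
lemma Z1_level_one_extends_along_normal_subgroup: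
  assumes tg: "topological_group G T" and N: "N \<lhd> G" "openin T N" and H: "subgroup H G"
    and c: "c \<in> Z1 p G T \<theta> H 1" and vanish: "\<And>k. k \<in> N \<inter> H \<Longrightarrow> c k = 0"
  shows "\<exists>c'. c' \<in> Z1 p G T \<theta> (N <#> H) 1 \<and> restrict c' H = c"
proof -
  have H_carrier: "H \<subseteq> carrier G"
    using H by (rule subgroup.subset)
  have N_subgroup: "subgroup N G"
    using N(1) by (rule normal_imp_subgroup)
  have invariant: "c (k \<otimes> h) = c h" if "k \<in> N \<inter> H" "h \<in> H" for k h
    using Z1_level_one_hom[OF H_carrier c _ that(2)] vanish[OF that(1)] Z1_range[OF c that(2)] that(1)
    by simp
  define U where "U = N <#> H"
  define c' where "c' = restrict (coset_extension G N H c) U"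
  have c'_eq: "c' x = c h" if "h \<in> H" "x \<in> N #> h" for x h
  proof -
    have "x \<in> U"
      using that unfolding U_def mem_set_mult_rcos_iff by blast
    then show ?thesis
      using coset_extension_eq[OF N_subgroup H invariant that] by (simp add: c'_def)
  qed
  have "c' \<in> Z1 p G T \<theta> U 1"
  proof (rule Z1_memI)
    show "c' \<in> extensional U"
      by (simp add: c'_def)
    show "0 \<le> c' x \<and> c' x < p ^ 1" if "x \<in> U" for x
      using that c'_eq Z1_range[OF c] unfolding U_def mem_set_mult_rcos_iff by fastforce
    show "c' (x \<otimes> y) = (c' x + \<theta> x 1 * c' y) mod p ^ 1" if xy: "x \<in> U" "y \<in> U" for x y
    proof -
      obtain h1 h2 where h: "h1 \<in> H" "x \<in> N #> h1" "h2 \<in> H" "y \<in> N #> h2"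
        using xy unfolding U_def mem_set_mult_rcos_iff by blast
      have carrier: "h1 \<in> carrier G" "h2 \<in> carrier G" "x \<in> carrier G"
        using h H_carrier r_coset_subset_G[OF normal_imp_subgroup[OF N(1), THEN subgroup.subset]]
        by auto
      have "x \<otimes> y \<in> (N #> h1) <#> (N #> h2)"
        using h unfolding set_mult_def by blast
      then have "x \<otimes> y \<in> N #> (h1 \<otimes> h2)"
        using normal.rcos_sum[OF N(1) carrier(1,2)] by simp
      then have "c' (x \<otimes> y) = c (h1 \<otimes> h2)"
        using c'_eq subgroup.m_closed[OF H h(1,3)] by blast
      then show ?thesis
        using Z1_level_one_hom[OF H_carrier c h(1,3)] c'_eq[OF h(1,2)] c'_eq[OF h(3,4)]
          theta_level_one[OF carrier(3)] by simp
    qed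
    show "continuous_map (subtopology T U) (discrete_topology UNIV) c'"
    proof (rule continuous_map_discrete_if_locally_constant)
      fix x assume "x \<in> topspace (subtopology T U)"
      then obtain h where h: "h \<in> H" "x \<in> N #> h"
        by (auto simp: U_def mem_set_mult_rcos_iff)
      have "N #> h \<subseteq> U"
        using h(1) by (auto simp: U_def mem_set_mult_rcos_iff)
      moreover have "openin T (N #> h)"
        using openin_rcos[OF tg N(2)] h(1) H_carrier by blast
      ultimately have "openin (subtopology T U) (N #> h)"
        by (rule subset_openin_subtopology[rotated])
      then show "\<exists>S. openin (subtopology T U) S \<and> x \<in> S \<and> (\<forall>y \<in> S. c' y = c' x)"
        using h c'_eq by metis
    qed
  qed
  moreover have "restrict c' H = c"
  proof (rule extensionalityI[OF _ Z1_extensional[OF c]])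
    show "restrict c' H h = c h" if "h \<in> H" for h
      using that c'_eq rcos_self[OF _ N_subgroup] H_carrier by auto
  qed simp
  ultimately show ?thesis
    unfolding U_def by blast
qed

lemma Z1_level_one_extends_to_open_subgroup:
  assumes pf: "profinite_group G T" and H: "subgroup H G" and c: "c \<in> Z1 p G T \<theta> H 1"
  shows "\<exists>U c'. subgroup U G \<and> openin T U \<and> H \<subseteq> U \<and> c' \<in> Z1 p G T \<theta> U 1 \<and> restrict c' H = c"
proof -
  have tg: "topological_group G T"
    using pf by (simp add: profinite_group_def)
  obtain W where W: "openin T W" "\<one> \<in> W" "\<forall>h \<in> W \<inter> H. c h = 0"
    using Z1_level_one_vanishes_near_one[OF tg H c] by blast
  obtain N where N: "N \<lhd> G" "openin T N" "N \<subseteq> W"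
    using profinite_open_normal_subgroup_in_nbhd[OF pf W(1,2)] by blast
  have N_subgroup: "subgroup N G"
    using N(1) by (rule normal_imp_subgroup)
  obtain c' where "c' \<in> Z1 p G T \<theta> (N <#> H) 1" "restrict c' H = c"
    using Z1_level_one_extends_along_normal_subgroup[OF tg N(1,2) H c] N(3) W(3) by blast
  moreover have "subgroup (N <#> H) G"
    using set_mult_normal_subgroup[OF N(1) H] .
  moreover have "N \<subseteq> N <#> H" "H \<subseteq> N <#> H"
    using subgroup.one_closed[OF H] subgroup.one_closed[OF N_subgroup]
      subgroup.subset[OF H] subgroup.subset[OF N_subgroup]
    unfolding set_mult_def by force+
  moreover have "openin T (N <#> H)"
    using openin_subgroup_if_nbhd_of_one[OF tg \<open>subgroup (N <#> H) G\<close> N(2)]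
      subgroup.one_closed[OF N_subgroup] \<open>N \<subseteq> N <#> H\<close> by blast
  ultimately show ?thesis
    by blast
qed

end

theorem mainTheorem10:
  fixes p :: int and G :: "('a, 'b) monoid_scheme" and T :: "'a topology"
    and \<theta> :: "'a \<Rightarrow> nat \<Rightarrow> int"
  assumes "prime p"
    and "profinite_group G T"
    and "orientation p G T \<theta>"
    and "\<And>U n. subgroup U G \<Longrightarrow> openin T U \<Longrightarrow> n \<ge> 1 \<Longrightarrow>
           H1_reduction_surjective p G T \<theta> U n"
  shows "cyclotomic p G T \<theta>"
proof -
  interpret oriented_group G p T \<theta>
    using assms(1-3) by (simp add: oriented_group_def oriented_group_axioms_def profinite_group_def
        topological_group_def)
  show ?thesis
    unfolding cyclotomic_def
  proof (intro allI impI, elim conjE)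
    fix H and n :: nat
    assume H: "subgroup H G" and n: "1 \<le> n"
    show "H1_reduction_surjective p G T \<theta> H n"
      unfolding H1_reduction_surjective_iff[OF H n]
    proof
      fix c assume "c \<in> Z1 p G T \<theta> H 1"
      then obtain U c' where U: "subgroup U G" "openin T U" "H \<subseteq> U"
        and c': "c' \<in> Z1 p G T \<theta> U 1" "restrict c' H = c"
        using Z1_level_one_extends_to_open_subgroup[OF assms(2) H] by blast
      obtain x where x: "x \<in> Z1 p G T \<theta> U n" "reduce_cocycle p U x = c'"
        using assms(4)[OF U(1,2) n] c'(1) H1_reduction_surjective_iff[OF U(1) n] by blast
      then have "reduce_cocycle p H (restrict x H) = c"
        using reduce_cocycle_restrict[OF U(3)] c'(2) by simp
      then show "c \<in> reduce_cocycle p H ` Z1 p G T \<theta> H n"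
        using restrict_in_Z1[OF H U(3) x(1)] by blast
    qed
  qed
qed

end
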